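(* For every constant $c_0>0$ there is a constant $K$ (depending only on $c_0$) such that the following holds. For any real symmetric positive definite matrix $M$, any matrix $Z$ with $M^{-1}\approx_{c_0}ZZ^\top$, and any $\epsilon>0$, there exists a linear operator $\tilde C$, given by a polynomial expression in $M$, $Z$ and $Z^\top$ of degree at most $K\max(1,\log(1/\epsilon))$, such that $\tilde C\tilde C^\top\approx_\epsilon M^{-1}$.
   Context: For symmetric $A,B$, $A\approx_\epsilon B$ means $e^{\epsilon}A\succeq B\succeq e^{-\epsilon}A$ in the Loewner order. *)

theory Defs
  imports "Jordan_Normal_Form.Matrix"
begin

definition pos_def_mat :: "real mat \<Rightarrow> bool" where
  "pos_def_mat M \<longleftrightarrow> M \<in> carrier_mat (dim_row M) (dim_row M) \<and> transpose_mat M = M \<and>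
     (\<forall>x \<in> carrier_vec (dim_row M). x \<noteq> 0\<^sub>v (dim_row M) \<longrightarrow> x \<bullet> (M *\<^sub>v x) > 0)"

definition loewner_ge :: "real mat \<Rightarrow> real mat \<Rightarrow> bool" where
  "loewner_ge A B \<longleftrightarrow> A \<in> carrier_mat (dim_row A) (dim_row A) \<and> B \<in> carrier_mat (dim_row A) (dim_row A) \<and>
     (\<forall>x \<in> carrier_vec (dim_row A). x \<bullet> (B *\<^sub>v x) \<le> x \<bullet> (A *\<^sub>v x))"

definition spec_approx :: "real \<Rightarrow> real mat \<Rightarrow> real mat \<Rightarrow> bool" where
  "spec_approx eps A B \<longleftrightarrow> loewner_ge (exp eps \<cdot>\<^sub>m A) B \<and> loewner_ge B (exp (- eps) \<cdot>\<^sub>m A)"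

text \<open>poly_expr M Z C d: C is given by a (noncommutative) polynomial expression in
  M, Z and Z^T with real coefficients, of degree at most d.\<close>
inductive poly_expr :: "real mat \<Rightarrow> real mat \<Rightarrow> real mat \<Rightarrow> nat \<Rightarrow> bool"
  for M Z :: "real mat" where
  id_row: "poly_expr M Z (1\<^sub>m (dim_row Z)) 0"
| id_col: "poly_expr M Z (1\<^sub>m (dim_col Z)) 0"
| var_M: "poly_expr M Z M 1"
| var_Z: "poly_expr M Z Z 1"
| var_ZT: "poly_expr M Z (transpose_mat Z) 1"
| smult: "poly_expr M Z A d \<Longrightarrow> poly_expr M Z (c \<cdot>\<^sub>m A) d"
| add: "poly_expr M Z A d \<Longrightarrow> poly_expr M Z B d \<Longrightarrow> dim_row A = dim_row B \<Longrightarrow>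
        dim_col A = dim_col B \<Longrightarrow> poly_expr M Z (A + B) d"
| mult: "poly_expr M Z A d1 \<Longrightarrow> poly_expr M Z B d2 \<Longrightarrow> dim_col A = dim_row B \<Longrightarrow>
        poly_expr M Z (A * B) (d1 + d2)"
| mono: "poly_expr M Z A d \<Longrightarrow> d \<le> d' \<Longrightarrow> poly_expr M Z A d'"

end

(*
  With s = 1 / cosh c0, the matrix T = I - s Z Z^T M is self-adjoint for the inner product
  <x, y> = x . M y, and M^-1 ~_c0 Z Z^T confines its numerical radius to tanh c0 < 1.
  Let F be the first N terms of the Taylor series of (I - T)^(-1/2) and C = sqrt s F Z.
  For x = M u one gets x . C C^T x = <F u, (I - T) F u> = sum_(i,j<N) c_i c_j
  (<u, T^(i+j) u> - <u, T^(i+j+1) u>). The truncated square of the series agrees with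
  1 / (1 - x) below degree N and has coefficients at most N above it, while
  |<u, T^m u>| <= tanh(c0)^m <u, u>; so x . C C^T x is within N (N + 1) tanh(c0)^N of
  <u, u> = x . M^-1 x. This relative error is below 1 - exp (-eps) for N = O(log (1 / eps)),
  and C has degree 3 N + 1 in M, Z and Z^T.
*)

theory Submission
  imports Defs "HOL-Computational_Algebra.Formal_Power_Series" "Jordan_Normal_Form.Determinant"
begin

section \<open>Taylor coefficients of the inverse square root\<close>

text \<open>Taylor coefficients of \<open>(1 - x) powr (-1/2)\<close>.\<close>
definition inv_sqrt_coeff :: "nat \<Rightarrow> real" where
  "inv_sqrt_coeff j = (-1) ^ j * ((-1/2) gchoose j)"

lemma inv_sqrt_coeff_pochhammer: "inv_sqrt_coeff j = pochhammer (1/2) j / fact j"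
  unfolding inv_sqrt_coeff_def gbinomial_pochhammer by (simp add: power_mult_distrib[symmetric])

lemma inv_sqrt_coeff_bounds: "0 \<le> inv_sqrt_coeff j \<and> inv_sqrt_coeff j \<le> 1"
proof -
  have "0 \<le> pochhammer (1/2::real) j \<and> pochhammer (1/2::real) j \<le> pochhammer 1 j"
    by (induction j) (simp_all add: pochhammer_Suc mult_mono)
  then show ?thesis
    using pochhammer_pos[of "1::real" j]
    by (simp add: inv_sqrt_coeff_pochhammer pochhammer_fact divide_le_eq_1)
qed

text \<open>The square of the series is \<open>1 / (1 - x)\<close>; this is Vandermonde's identity at \<open>-1/2, -1/2\<close>.\<close>
lemma inv_sqrt_coeff_convolution: "(\<Sum>i=0..m. inv_sqrt_coeff i * inv_sqrt_coeff (m - i)) = 1"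
proof -
  have "inv_sqrt_coeff i * inv_sqrt_coeff (m - i) = (-1) ^ m * (((-1/2) gchoose i) * ((-1/2) gchoose (m - i)))"
    if "i \<le> m" for i
  proof -
    have "(-1::real) ^ i * (-1) ^ (m - i) = (-1) ^ m"
      using that by (simp add: power_add[symmetric])
    then show ?thesis
      unfolding inv_sqrt_coeff_def by (metis (no_types, lifting) mult.assoc mult.left_commute)
  qed
  then have "(\<Sum>i=0..m. inv_sqrt_coeff i * inv_sqrt_coeff (m - i))
      = (-1) ^ m * (\<Sum>i=0..m. ((-1/2) gchoose i) * ((-1/2) gchoose (m - i)))"
    by (simp add: sum_distrib_left)
  also have "\<dots> = (-1) ^ m * ((-1) gchoose m)"
    using gbinomial_Vandermonde[of "-1/2::real" "-1/2" m] by simp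
  also have "((-1::real) gchoose m) = (-1) ^ m"
    by (simp add: gbinomial_pochhammer pochhammer_fact[symmetric])
  finally show ?thesis by (simp add: power_mult_distrib[symmetric])
qed

definition trunc_square_coeff :: "nat \<Rightarrow> nat \<Rightarrow> real" where
  "trunc_square_coeff N m = (\<Sum>i<N. \<Sum>j<N. if i + j = m then inv_sqrt_coeff i * inv_sqrt_coeff j else 0)"

lemma trunc_square_coeff_eq:
  "trunc_square_coeff N m
     = (\<Sum>i<N. if i \<le> m \<and> m - i < N then inv_sqrt_coeff i * inv_sqrt_coeff (m - i) else 0)"
  unfolding trunc_square_coeff_def
proof (intro sum.cong refl)
  fix i
  have "(\<Sum>j<N. if i + j = m then inv_sqrt_coeff i * inv_sqrt_coeff j else 0)
      = (\<Sum>j<N. if j = m - i then (if i \<le> m then inv_sqrt_coeff i * inv_sqrt_coeff j else 0) else 0)"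
    by (intro sum.cong refl) auto
  then show "(\<Sum>j<N. if i + j = m then inv_sqrt_coeff i * inv_sqrt_coeff j else 0)
      = (if i \<le> m \<and> m - i < N then inv_sqrt_coeff i * inv_sqrt_coeff (m - i) else 0)"
    by simp
qed

lemma trunc_square_coeff_eq_1:
  assumes "m < N"
  shows "trunc_square_coeff N m = 1"
proof -
  have "trunc_square_coeff N m = (\<Sum>i=0..m. inv_sqrt_coeff i * inv_sqrt_coeff (m - i))"
    unfolding trunc_square_coeff_eq using assms by (intro sum.mono_neutral_cong_right) auto
  then show ?thesis by (simp add: inv_sqrt_coeff_convolution)
qed

lemma trunc_square_coeff_bounds: "0 \<le> trunc_square_coeff N m \<and> trunc_square_coeff N m \<le> real N"
proof -
  let ?t = "\<lambda>i. if i \<le> m \<and> m - i < N then inv_sqrt_coeff i * inv_sqrt_coeff (m - i) else 0"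
  have t: "0 \<le> ?t i \<and> ?t i \<le> 1" for i
    using inv_sqrt_coeff_bounds[of i] inv_sqrt_coeff_bounds[of "m - i"] by (simp add: mult_le_one)
  have "trunc_square_coeff N m \<le> (\<Sum>i<N. 1)"
    unfolding trunc_square_coeff_eq by (rule sum_mono) (use t in auto)
  moreover have "0 \<le> trunc_square_coeff N m"
    unfolding trunc_square_coeff_eq by (rule sum_nonneg) (use t in auto)
  ultimately show ?thesis by simp
qed

lemma sum_trunc_square_coeff:
  assumes "2 * N \<le> K"
  shows "(\<Sum>m<K. trunc_square_coeff N m * g m)
    = (\<Sum>i<N. \<Sum>j<N. inv_sqrt_coeff i * inv_sqrt_coeff j * g (i + j))"
proof -
  have "(\<Sum>m<K. trunc_square_coeff N m * g m)
      = (\<Sum>i<N. \<Sum>j<N. \<Sum>m<K. if i + j = m then inv_sqrt_coeff i * inv_sqrt_coeff j * g m else 0)"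
    unfolding trunc_square_coeff_def sum_distrib_right
    by (subst sum.swap, subst (2) sum.swap) (intro sum.cong refl, auto)
  also have "\<dots> = (\<Sum>i<N. \<Sum>j<N. inv_sqrt_coeff i * inv_sqrt_coeff j * g (i + j))"
    using assms by (intro sum.cong refl) auto
  finally show ?thesis .
qed

text \<open>Multiplying the truncated square by \<open>1 - x\<close>: its coefficients are \<open>1, 0, \<dots>, 0\<close>
  below \<open>N\<close> and at most \<open>N\<close> in absolute value up to degree \<open>2 N\<close>.\<close>
lemma trunc_square_times_one_minus:
  fixes G :: "nat \<Rightarrow> real"
  assumes "N \<ge> 1"
  shows "(\<Sum>i<N. \<Sum>j<N. inv_sqrt_coeff i * inv_sqrt_coeff j * (G (i + j) - G (i + j + 1)))
    = G 0 + (\<Sum>m\<in>{N..<2*N+1}. (trunc_square_coeff N m - trunc_square_coeff N (m - 1)) * G m)"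
proof -
  define e where "e m = trunc_square_coeff N m - (if m = 0 then 0 else trunc_square_coeff N (m - 1))" for m
  have shifted: "(\<Sum>i<N. \<Sum>j<N. inv_sqrt_coeff i * inv_sqrt_coeff j * G (i + j + 1))
      = (\<Sum>m<2*N+1. (if m = 0 then 0 else trunc_square_coeff N (m - 1)) * G m)"
  proof -
    have "(\<Sum>m<Suc (2*N). (if m = 0 then 0 else trunc_square_coeff N (m - 1)) * G m)
        = (\<Sum>m<2*N. trunc_square_coeff N m * G (m + 1))"
      by (subst sum.lessThan_Suc_shift) simp
    then show ?thesis by (simp add: sum_trunc_square_coeff)
  qed
  have "(\<Sum>i<N. \<Sum>j<N. inv_sqrt_coeff i * inv_sqrt_coeff j * (G (i + j) - G (i + j + 1)))
      = (\<Sum>m<2*N+1. e m * G m)"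
    unfolding e_def left_diff_distrib sum_subtractf right_diff_distrib shifted
      sum_trunc_square_coeff[of N "2 * N + 1", symmetric, OF le_add1] ..
  also have "{..<2*N+1} = {..<N} \<union> {N..<2*N+1}" by auto
  also have "(\<Sum>m\<in>{..<N} \<union> {N..<2*N+1}. e m * G m) = (\<Sum>m<N. e m * G m) + (\<Sum>m\<in>{N..<2*N+1}. e m * G m)"
    by (rule sum.union_disjoint) auto
  also have "(\<Sum>m<N. e m * G m) = (\<Sum>m<N. if m = 0 then G 0 else 0)"
    by (intro sum.cong refl) (auto simp: e_def trunc_square_coeff_eq_1)
  also have "\<dots> = G 0" using assms by simp
  also have "(\<Sum>m\<in>{N..<2*N+1}. e m * G m)
      = (\<Sum>m\<in>{N..<2*N+1}. (trunc_square_coeff N m - trunc_square_coeff N (m - 1)) * G m)"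
    using assms by (intro sum.cong refl) (auto simp: e_def)
  finally show ?thesis .
qed

lemma trunc_square_times_one_minus_error:
  fixes G :: "nat \<Rightarrow> real"
  assumes "N \<ge> 1" "0 \<le> r" "r \<le> 1" "\<And>m. \<bar>G m\<bar> \<le> r ^ m * G 0"
  shows "\<bar>(\<Sum>i<N. \<Sum>j<N. inv_sqrt_coeff i * inv_sqrt_coeff j * (G (i + j) - G (i + j + 1))) - G 0\<bar>
    \<le> real N * (real N + 1) * r ^ N * G 0"
proof -
  have "\<bar>(trunc_square_coeff N m - trunc_square_coeff N (m - 1)) * G m\<bar> \<le> real N * (r ^ N * G 0)"
    if "m \<in> {N..<2*N+1}" for m
  proof -
    have "\<bar>trunc_square_coeff N m - trunc_square_coeff N (m - 1)\<bar> \<le> real N"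
      using trunc_square_coeff_bounds[of N m] trunc_square_coeff_bounds[of N "m - 1"] by linarith
    moreover have "\<bar>G m\<bar> \<le> r ^ N * G 0"
    proof -
      have "0 \<le> G 0" using assms(4)[of 0] by simp
      moreover have "r ^ m \<le> r ^ N" using that assms(2,3) by (intro power_decreasing) auto
      ultimately show ?thesis using assms(4)[of m] by (meson mult_right_mono order_trans)
    qed
    ultimately show ?thesis unfolding abs_mult by (rule mult_mono) auto
  qed
  then have "\<bar>\<Sum>m\<in>{N..<2*N+1}. (trunc_square_coeff N m - trunc_square_coeff N (m - 1)) * G m\<bar>
      \<le> (\<Sum>m\<in>{N..<2*N+1}. real N * (r ^ N * G 0))"
    by (intro order_trans[OF sum_abs] sum_mono)
  also have "\<dots> = real N * (real N + 1) * r ^ N * G 0" by simp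
  finally show ?thesis
    unfolding trunc_square_times_one_minus[OF assms(1)] by simp
qed

section \<open>Choice of the truncation order\<close>

lemma half_exp_neg_max_ln_inverse_le:
  fixes eps :: real
  assumes "eps > 0"
  shows "exp (- max 1 (ln (1 / eps))) / 2 \<le> 1 - exp (- eps)"
proof -
  have "exp (- eps) \<le> 1 / (1 + eps)"
    using exp_ge_add_one_self[of eps] assms by (simp add: exp_minus field_simps)
  then have lower: "eps / (1 + eps) \<le> 1 - exp (- eps)"
    using assms by (simp add: field_simps)
  show ?thesis
  proof (cases "eps \<ge> 1")
    case True
    then have "1 / 2 \<le> eps / (1 + eps)" by (simp add: field_simps)
    moreover have "exp (- max 1 (ln (1 / eps))) \<le> 1" by simp
    ultimately show ?thesis using lower by linarith
  next
    case False
    have "exp (- max 1 (ln (1 / eps))) \<le> exp (- ln (1 / eps))" by simp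
    also have "\<dots> = eps" using assms by (simp add: ln_div)
    finally have "exp (- max 1 (ln (1 / eps))) \<le> eps" .
    moreover have "eps / 2 \<le> eps / (1 + eps)" using False assms by (intro divide_left_mono) auto
    ultimately show ?thesis using lower by linarith
  qed
qed

lemma square_times_power_le_exp:
  fixes r \<theta> :: real
  assumes "0 < r" "0 < \<theta>" "\<theta> \<le> 1" "3 * \<theta> \<le> - ln r"
  shows "real N * (real N + 1) * r ^ N \<le> exp (- (\<theta> * real N)) / \<theta>\<^sup>2"
proof -
  have "\<theta> * (real N + 1) \<le> 1 + \<theta> * real N"
    using assms(3) by (simp add: algebra_simps)
  also have "\<dots> \<le> exp (\<theta> * real N)" by (rule exp_ge_add_one_self)
  finally have "\<theta> * (real N + 1) \<le> exp (\<theta> * real N)" .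
  then have Nsuc: "real N + 1 \<le> exp (\<theta> * real N) / \<theta>"
    using assms(2) by (simp add: field_simps)
  have "r ^ N = exp (real N * ln r)"
    using assms(1) by (simp add: exp_of_nat_mult)
  also have "\<dots> \<le> exp (- (3 * \<theta> * real N))"
    using mult_left_mono[OF assms(4), of "real N"] by (simp add: algebra_simps)
  finally have rN: "r ^ N \<le> exp (- (3 * \<theta> * real N))" .
  have "real N * (real N + 1) * r ^ N \<le> (real N + 1) * (real N + 1) * r ^ N"
    using assms(1) by (intro mult_right_mono) auto
  also have "\<dots> \<le> (exp (\<theta> * real N) / \<theta>) * (exp (\<theta> * real N) / \<theta>) * exp (- (3 * \<theta> * real N))"
    using Nsuc rN assms(1) by (intro mult_mono) auto
  also have "\<dots> = exp (- (\<theta> * real N)) / \<theta>\<^sup>2"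
    by (simp add: power2_eq_square exp_add[symmetric] algebra_simps)
  finally show ?thesis .
qed

lemma truncation_order_exists:
  fixes r :: real
  assumes "0 < r" "r < 1"
  shows "\<exists>K. \<forall>eps>0. \<exists>N\<ge>1. real N * (real N + 1) * r ^ N \<le> 1 - exp (- eps)
           \<and> real N \<le> K * max 1 (ln (1 / eps))"
proof -
  define \<theta> where "\<theta> = min 1 (- ln r / 3)"
  have \<theta>: "0 < \<theta>" "\<theta> \<le> 1" "3 * \<theta> \<le> - ln r" unfolding \<theta>_def using assms by auto
  define \<kappa> where "\<kappa> = ln (2 / \<theta>\<^sup>2)"
  have "\<theta>\<^sup>2 \<le> 1" using \<theta> by (simp add: power_le_one)
  then have \<kappa>: "\<kappa> \<ge> 0" unfolding \<kappa>_def using \<theta> by (simp add: field_simps)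
  have exp_\<kappa>: "exp (- \<kappa>) = \<theta>\<^sup>2 / 2" unfolding \<kappa>_def using \<theta> by (simp add: exp_minus)
  show ?thesis
  proof (rule exI[of _ "1 / \<theta> + \<kappa> / \<theta> + 1"], intro allI impI)
    fix eps :: real assume eps: "eps > 0"
    define L where "L = max 1 (ln (1 / eps))"
    have L: "L \<ge> 1" unfolding L_def by simp
    define N where "N = nat \<lceil>(L + \<kappa>) / \<theta>\<rceil>"
    have pos: "(L + \<kappa>) / \<theta> > 0" using L \<kappa> \<theta> by simp
    have "(L + \<kappa>) / \<theta> \<le> real N" "real N \<le> (L + \<kappa>) / \<theta> + 1" "N \<ge> 1"
      unfolding N_def using pos by linarith+
    then have N: "N \<ge> 1" "L + \<kappa> \<le> \<theta> * real N" "real N \<le> (L + \<kappa>) / \<theta> + 1"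
      using \<theta> by (simp_all add: field_simps)
    have "real N * (real N + 1) * r ^ N \<le> exp (- (\<theta> * real N)) / \<theta>\<^sup>2"
      using square_times_power_le_exp assms \<theta> by blast
    also have "\<dots> \<le> exp (- (L + \<kappa>)) / \<theta>\<^sup>2"
      using N(2) by (intro divide_right_mono) auto
    also have "\<dots> = exp (- L) / 2"
      using exp_\<kappa> \<theta> by (simp add: exp_diff exp_minus field_simps)
    also have "\<dots> \<le> 1 - exp (- eps)"
      unfolding L_def by (rule half_exp_neg_max_ln_inverse_le[OF eps])
    finally have "real N * (real N + 1) * r ^ N \<le> 1 - exp (- eps)" .
    moreover have "real N \<le> (1 / \<theta> + \<kappa> / \<theta> + 1) * L"
    proof -
      have "\<kappa> / \<theta> * 1 \<le> \<kappa> / \<theta> * L" using \<kappa> \<theta> L by (intro mult_left_mono) auto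
      then show ?thesis using N(3) L by (simp add: algebra_simps add_divide_distrib)
    qed
    ultimately show "\<exists>N\<ge>1. real N * (real N + 1) * r ^ N \<le> 1 - exp (- eps)
        \<and> real N \<le> (1 / \<theta> + \<kappa> / \<theta> + 1) * max 1 (ln (1 / eps))"
      using N(1) unfolding L_def by blast
  qed
qed

lemma mult_mat_vec_carrier_square [simp]:
  "A \<in> carrier_mat n n \<Longrightarrow> v \<in> carrier_vec n \<Longrightarrow> A *\<^sub>v v \<in> carrier_vec n"
  using mult_mat_vec_carrier .

lemma smult_mult_mat_vec:
  fixes A :: "'a :: comm_ring_1 mat"
  assumes "A \<in> carrier_mat nr nc" "v \<in> carrier_vec nc"
  shows "(a \<cdot>\<^sub>m A) *\<^sub>v v = a \<cdot>\<^sub>v (A *\<^sub>v v)"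
  using assms by (intro eq_vecI) (auto simp: scalar_prod_smult_left)

lemma transpose_smult_mat: "transpose_mat (a \<cdot>\<^sub>m A) = a \<cdot>\<^sub>m transpose_mat A"
  by (intro eq_matI) auto

lemma pow_mat_Suc_left:
  fixes A :: "'a :: semiring_1 mat"
  assumes "A \<in> carrier_mat n n"
  shows "A ^\<^sub>m Suc k = A * A ^\<^sub>m k"
proof (induction k)
  case 0
  show ?case using assms by simp
next
  case (Suc k)
  have "A ^\<^sub>m Suc (Suc k) = (A * A ^\<^sub>m k) * A" using Suc by simp
  also have "\<dots> = A * (A ^\<^sub>m k * A)" using assms by (simp add: assoc_mult_mat[of _ n n _ n _ n])
  also have "\<dots> = A * A ^\<^sub>m Suc k" by simp
  finally show ?case .
qed

lemma pow_mat_Suc_mult_vec: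
  fixes A :: "'a :: comm_semiring_1 mat"
  assumes "A \<in> carrier_mat n n" "v \<in> carrier_vec n"
  shows "A ^\<^sub>m Suc k *\<^sub>v v = A *\<^sub>v (A ^\<^sub>m k *\<^sub>v v)"
  unfolding pow_mat_Suc_left[OF assms(1)] using assms by (intro assoc_mult_mat_vec[of _ n n _ n]) auto

lemma zero_mult_mat_vec: "v \<in> carrier_vec nc \<Longrightarrow> 0\<^sub>m nr nc *\<^sub>v v = (0\<^sub>v nr :: 'a :: semiring_0 vec)"
  by (intro eq_vecI) (auto simp: scalar_prod_def)

lemma spec_approx_of_relative_error:
  assumes "A \<in> carrier_mat n n" "B \<in> carrier_mat n n" "eps > 0"
    and rel: "\<And>x. x \<in> carrier_vec n \<Longrightarrow> \<bar>x \<bullet> (A *\<^sub>v x) - x \<bullet> (B *\<^sub>v x)\<bar> \<le> (1 - exp (- eps)) * (x \<bullet> (B *\<^sub>v x))"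
  shows "spec_approx eps A B"
proof -
  have bounds: "x \<bullet> (B *\<^sub>v x) \<le> exp eps * (x \<bullet> (A *\<^sub>v x)) \<and> exp (- eps) * (x \<bullet> (A *\<^sub>v x)) \<le> x \<bullet> (B *\<^sub>v x)"
    if x: "x \<in> carrier_vec n" for x
  proof -
    define Q where "Q = x \<bullet> (A *\<^sub>v x)"
    define V where "V = x \<bullet> (B *\<^sub>v x)"
    have rel': "\<bar>Q - V\<bar> \<le> (1 - exp (- eps)) * V" unfolding Q_def V_def by (rule rel[OF x])
    have "0 \<le> (1 - exp (- eps)) * V" using rel' by (meson abs_ge_zero order_trans)
    moreover have "0 < 1 - exp (- eps)" using assms(3) by simp
    ultimately have V: "0 \<le> V" by (simp add: zero_le_mult_iff)
    have "exp (- eps) * V \<le> Q" using rel' by (simp add: abs_le_iff algebra_simps)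
    then have "exp eps * (exp (- eps) * V) \<le> exp eps * Q" by simp
    then have lower: "V \<le> exp eps * Q" by (simp add: mult.assoc[symmetric] exp_add[symmetric])
    have "2 - exp (- eps) \<le> exp eps"
      using exp_ge_add_one_self[of eps] exp_ge_add_one_self[of "- eps"] by linarith
    have "Q \<le> (2 - exp (- eps)) * V" using rel' by (simp add: abs_le_iff algebra_simps)
    also have "\<dots> \<le> exp eps * V"
      using \<open>2 - exp (- eps) \<le> exp eps\<close> V by (rule mult_right_mono)
    finally have "exp (- eps) * Q \<le> exp (- eps) * (exp eps * V)" by simp
    then have upper: "exp (- eps) * Q \<le> V" by (simp add: mult.assoc[symmetric] exp_add[symmetric])
    show ?thesis using lower upper unfolding Q_def V_def ..
  qed
  show ?thesis
    unfolding spec_approx_def loewner_ge_def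
    using assms(1,2) carrier_matD[OF assms(1)] carrier_matD[OF assms(2)] bounds
    by (simp add: smult_mult_mat_vec[of _ n n])
qed

fun inv_sqrt_trunc :: "real mat \<Rightarrow> nat \<Rightarrow> real mat" where
  "inv_sqrt_trunc T 0 = 0\<^sub>m (dim_row T) (dim_row T)"
| "inv_sqrt_trunc T (Suc N) = inv_sqrt_trunc T N + inv_sqrt_coeff N \<cdot>\<^sub>m T ^\<^sub>m N"

lemma inv_sqrt_trunc_carrier [simp]: "T \<in> carrier_mat n n \<Longrightarrow> inv_sqrt_trunc T N \<in> carrier_mat n n"
  by (induction N) auto

lemma zero_mat_eq_smult_one: "0\<^sub>m n n = (0 :: 'a :: semiring_1) \<cdot>\<^sub>m 1\<^sub>m n"
  by (intro eq_matI) auto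

lemma poly_expr_pow_mat:
  assumes "poly_expr M Z T d" "T \<in> carrier_mat (dim_row Z) (dim_row Z)"
  shows "poly_expr M Z (T ^\<^sub>m j) (d * j)"
proof (induction j)
  case 0
  show ?case using poly_expr.id_row carrier_matD(1)[OF assms(2)] by simp
next
  case (Suc j)
  have "poly_expr M Z (T ^\<^sub>m j * T) (d * j + d)"
    using assms(2) by (intro poly_expr.mult[OF Suc assms(1)]) simp
  then show ?case by (simp add: add.commute)
qed

lemma poly_expr_inv_sqrt_trunc:
  assumes "poly_expr M Z T d" "T \<in> carrier_mat (dim_row Z) (dim_row Z)"
  shows "poly_expr M Z (inv_sqrt_trunc T N) (d * N)"
proof (induction N)
  case 0
  show ?case
    using poly_expr.smult[OF poly_expr.id_row, of M Z 0] carrier_matD(1)[OF assms(2)]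
    by (simp add: zero_mat_eq_smult_one)
next
  case (Suc N)
  have "poly_expr M Z (inv_sqrt_trunc T N) (d * Suc N)"
    using poly_expr.mono[OF Suc] by simp
  moreover have "poly_expr M Z (inv_sqrt_coeff N \<cdot>\<^sub>m T ^\<^sub>m N) (d * Suc N)"
    using poly_expr.mono[OF poly_expr.smult[OF poly_expr_pow_mat[OF assms]]] by simp
  moreover have "inv_sqrt_trunc T N \<in> carrier_mat (dim_row Z) (dim_row Z)"
    "inv_sqrt_coeff N \<cdot>\<^sub>m T ^\<^sub>m N \<in> carrier_mat (dim_row Z) (dim_row Z)"
    using assms(2) by simp_all
  ultimately show ?case
    unfolding inv_sqrt_trunc.simps by (intro poly_expr.add) (metis carrier_matD)+
qed

section \<open>Self-adjoint operators for a symmetric form\<close>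

locale symmetric_form =
  fixes n :: nat and M :: "real mat"
  assumes M_carrier [simp]: "M \<in> carrier_mat n n" and M_sym: "transpose_mat M = M"
begin

lemma M_dim [simp]: "dim_row M = n" "dim_col M = n"
  using carrier_matD[OF M_carrier] by auto

definition M_inner :: "real vec \<Rightarrow> real vec \<Rightarrow> real" where
  "M_inner x y = x \<bullet> (M *\<^sub>v y)"

lemma M_mult_scalar_prod:
  "x \<in> carrier_vec n \<Longrightarrow> y \<in> carrier_vec n \<Longrightarrow> (M *\<^sub>v x) \<bullet> y = M_inner x y"
  unfolding M_inner_def using transpose_vec_mult_scalar[of M n n y x] M_sym by simp

lemma M_inner_sym: "x \<in> carrier_vec n \<Longrightarrow> y \<in> carrier_vec n \<Longrightarrow> M_inner x y = M_inner y x"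
  using M_mult_scalar_prod[of x y] comm_scalar_prod[of "M *\<^sub>v x" n y] unfolding M_inner_def by auto

lemma M_inner_add_right:
  "x \<in> carrier_vec n \<Longrightarrow> y \<in> carrier_vec n \<Longrightarrow> z \<in> carrier_vec n \<Longrightarrow> M_inner x (y + z) = M_inner x y + M_inner x z"
  unfolding M_inner_def
  by (subst mult_add_distrib_mat_vec[of _ n n]) (auto intro: scalar_prod_add_distrib[of _ n])

lemma M_inner_smult_right:
  "x \<in> carrier_vec n \<Longrightarrow> y \<in> carrier_vec n \<Longrightarrow> M_inner x (a \<cdot>\<^sub>v y) = a * M_inner x y"
  unfolding M_inner_def by (auto simp: mult_mat_vec[of _ n n])

lemma M_inner_add_left:
  "x \<in> carrier_vec n \<Longrightarrow> y \<in> carrier_vec n \<Longrightarrow> z \<in> carrier_vec n \<Longrightarrow> M_inner (x + y) z = M_inner x z + M_inner y z"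
  by (simp add: M_inner_sym[of _ z] M_inner_add_right)

lemma M_inner_smult_left:
  "x \<in> carrier_vec n \<Longrightarrow> y \<in> carrier_vec n \<Longrightarrow> M_inner (a \<cdot>\<^sub>v x) y = a * M_inner x y"
  by (simp add: M_inner_sym[of _ y] M_inner_smult_right)

lemma M_inner_zero_right: "x \<in> carrier_vec n \<Longrightarrow> M_inner x (0\<^sub>v n) = 0"
  unfolding M_inner_def by (simp add: mult_mat_vec_def scalar_prod_def)

definition M_self_adjoint :: "real mat \<Rightarrow> bool" where
  "M_self_adjoint T \<longleftrightarrow> T \<in> carrier_mat n n \<and> transpose_mat T * M = M * T"

definition M_numerical_radius_le :: "real mat \<Rightarrow> real \<Rightarrow> bool" where
  "M_numerical_radius_le T r \<longleftrightarrow> (\<forall>v \<in> carrier_vec n. \<bar>M_inner v (T *\<^sub>v v)\<bar> \<le> r * M_inner v v)"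

lemma M_self_adjoint_carrier: "M_self_adjoint T \<Longrightarrow> T \<in> carrier_mat n n"
  unfolding M_self_adjoint_def by simp

lemma M_self_adjoint_transpose_apply:
  assumes "M_self_adjoint T" "x \<in> carrier_vec n"
  shows "transpose_mat T *\<^sub>v (M *\<^sub>v x) = M *\<^sub>v (T *\<^sub>v x)"
proof -
  have T: "T \<in> carrier_mat n n" using assms(1) unfolding M_self_adjoint_def by simp
  have "transpose_mat T *\<^sub>v (M *\<^sub>v x) = (transpose_mat T * M) *\<^sub>v x"
    using T assms(2) by (simp add: assoc_mult_mat_vec[of _ n n _ n])
  also have "\<dots> = (M * T) *\<^sub>v x" using assms(1) unfolding M_self_adjoint_def by simp
  finally show ?thesis using T assms(2) by (simp add: assoc_mult_mat_vec[of _ n n _ n])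
qed

lemma M_self_adjoint_inner:
  assumes "M_self_adjoint T" "x \<in> carrier_vec n" "y \<in> carrier_vec n"
  shows "M_inner (T *\<^sub>v x) y = M_inner x (T *\<^sub>v y)"
proof -
  have T: "T \<in> carrier_mat n n" using assms(1) unfolding M_self_adjoint_def by simp
  have "M_inner (T *\<^sub>v x) y = (M *\<^sub>v y) \<bullet> (T *\<^sub>v x)"
    unfolding M_inner_def using T assms by (intro comm_scalar_prod[of _ n]) auto
  also have "\<dots> = (transpose_mat T *\<^sub>v (M *\<^sub>v y)) \<bullet> x"
    using T assms by (intro transpose_vec_mult_scalar[symmetric, of _ n n]) auto
  also have "\<dots> = M_inner x (T *\<^sub>v y)"
    unfolding M_self_adjoint_transpose_apply[OF assms(1,3)] using T assms
    by (simp add: M_mult_scalar_prod M_inner_sym)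
  finally show ?thesis .
qed

lemma M_self_adjoint_one: "M_self_adjoint (1\<^sub>m n)"
  unfolding M_self_adjoint_def by simp

lemma M_self_adjoint_pow:
  assumes "M_self_adjoint T"
  shows "M_self_adjoint (T ^\<^sub>m j)"
proof (induction j)
  case 0
  have "dim_row T = n" using assms unfolding M_self_adjoint_def by (auto dest: carrier_matD)
  then show ?case unfolding M_self_adjoint_def by simp
next
  case (Suc j)
  have T: "T \<in> carrier_mat n n" "transpose_mat T * M = M * T" using assms unfolding M_self_adjoint_def by auto
  have IH: "transpose_mat (T ^\<^sub>m j) * M = M * T ^\<^sub>m j" using Suc unfolding M_self_adjoint_def by simp
  have "transpose_mat (T ^\<^sub>m Suc j) * M = transpose_mat T * (transpose_mat (T ^\<^sub>m j) * M)"
    using T by (simp add: transpose_mult[of _ n n _ n] assoc_mult_mat[of _ n n _ n _ n])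
  also have "\<dots> = (transpose_mat T * M) * T ^\<^sub>m j"
    unfolding IH using T by (intro assoc_mult_mat[symmetric, of _ n n _ n _ n]) auto
  also have "\<dots> = M * (T * T ^\<^sub>m j)"
    unfolding T(2) using T by (intro assoc_mult_mat[of _ n n _ n _ n]) auto
  also have "\<dots> = M * T ^\<^sub>m Suc j"
    by (simp only: pow_mat_Suc_left[OF T(1)])
  finally show ?case unfolding M_self_adjoint_def using T pow_carrier_mat by blast
qed

lemma M_self_adjoint_add:
  assumes "M_self_adjoint S" "M_self_adjoint T"
  shows "M_self_adjoint (S + T)"
proof -
  have S: "S \<in> carrier_mat n n" "transpose_mat S * M = M * S"
    and T: "T \<in> carrier_mat n n" "transpose_mat T * M = M * T"
    using assms unfolding M_self_adjoint_def by auto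
  have "transpose_mat (S + T) * M = transpose_mat S * M + transpose_mat T * M"
    using S T by (simp add: transpose_add[of _ n n] add_mult_distrib_mat[of _ n n _ _ n])
  also have "\<dots> = M * (S + T)"
    using S T by (simp add: mult_add_distrib_mat[of _ n n])
  finally show ?thesis unfolding M_self_adjoint_def using S T by simp
qed

lemma M_self_adjoint_smult:
  assumes "M_self_adjoint T"
  shows "M_self_adjoint (a \<cdot>\<^sub>m T)"
proof -
  have T: "T \<in> carrier_mat n n" "transpose_mat T * M = M * T"
    using assms unfolding M_self_adjoint_def by auto
  have "transpose_mat (a \<cdot>\<^sub>m T) * M = a \<cdot>\<^sub>m (transpose_mat T * M)"
    using T by (simp add: transpose_smult_mat mult_smult_assoc_mat[of _ n n _ n])
  also have "\<dots> = M * (a \<cdot>\<^sub>m T)"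
    using T by (simp add: mult_smult_distrib[of _ n n])
  finally show ?thesis unfolding M_self_adjoint_def using T by simp
qed

lemma M_self_adjoint_inv_sqrt_trunc:
  assumes "M_self_adjoint T"
  shows "M_self_adjoint (inv_sqrt_trunc T N)"
proof (induction N)
  case 0
  have "dim_row T = n" using assms unfolding M_self_adjoint_def by (auto dest: carrier_matD)
  then show ?case unfolding M_self_adjoint_def by simp
next
  case (Suc N)
  then show ?case
    by (simp add: M_self_adjoint_add M_self_adjoint_smult M_self_adjoint_pow[OF assms])
qed

lemma M_inner_add_smult:
  assumes "x \<in> carrier_vec n" "y \<in> carrier_vec n" "z \<in> carrier_vec n" "w \<in> carrier_vec n"
  shows "M_inner (x + a \<cdot>\<^sub>v y) (z + a \<cdot>\<^sub>v w)
    = M_inner x z + a * (M_inner x w + M_inner y z) + a\<^sup>2 * M_inner y w"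
  using assms by (simp add: M_inner_add_left M_inner_add_right M_inner_smult_left M_inner_smult_right
      algebra_simps power2_eq_square)

lemma M_inner_pow:
  assumes "M_self_adjoint T" "u \<in> carrier_vec n"
  shows "M_inner (T ^\<^sub>m i *\<^sub>v u) (T ^\<^sub>m j *\<^sub>v u) = M_inner u (T ^\<^sub>m (i + j) *\<^sub>v u)"
proof (induction i arbitrary: j)
  case 0
  have "dim_row T = n" using carrier_matD(1)[OF M_self_adjoint_carrier[OF assms(1)]] .
  then show ?case using assms(2) by simp
next
  case (Suc i)
  have T: "T \<in> carrier_mat n n" using M_self_adjoint_carrier[OF assms(1)] .
  note pow_Suc = pow_mat_Suc_mult_vec[OF T assms(2)]
  have "M_inner (T ^\<^sub>m Suc i *\<^sub>v u) (T ^\<^sub>m j *\<^sub>v u) = M_inner (T ^\<^sub>m i *\<^sub>v u) (T ^\<^sub>m Suc j *\<^sub>v u)"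
    unfolding pow_Suc using T assms by (simp add: M_self_adjoint_inner)
  also have "\<dots> = M_inner u (T ^\<^sub>m (Suc i + j) *\<^sub>v u)"
    using Suc.IH[of "Suc j"] by simp
  finally show ?case .
qed

lemma M_numerical_radius_le_nonneg:
  assumes "M_numerical_radius_le T r" "r > 0" "v \<in> carrier_vec n"
  shows "0 \<le> M_inner v v"
proof -
  have "0 \<le> r * M_inner v v"
    using assms(1,3) unfolding M_numerical_radius_le_def by (meson abs_ge_zero order_trans)
  then show ?thesis using assms(2) by (simp add: zero_le_mult_iff)
qed

text \<open>For self-adjoint \<open>T\<close> the norm is bounded by the numerical radius: apply the
  hypothesis to \<open>T v \<plusminus> r v\<close> and add.\<close>
lemma M_inner_image_le:
  assumes "M_self_adjoint T" "M_numerical_radius_le T r" "r > 0" "v \<in> carrier_vec n"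
  shows "M_inner (T *\<^sub>v v) (T *\<^sub>v v) \<le> r\<^sup>2 * M_inner v v"
proof -
  have T: "T \<in> carrier_mat n n" using M_self_adjoint_carrier[OF assms(1)] .
  define x where "x = T *\<^sub>v v"
  have x: "x \<in> carrier_vec n" "T *\<^sub>v x \<in> carrier_vec n" "T *\<^sub>v v \<in> carrier_vec n"
    unfolding x_def using T assms(4) by simp_all
  define Q where "Q = M_inner x x"
  have Q: "M_inner x (T *\<^sub>v v) = Q" "M_inner v (T *\<^sub>v x) = Q"
    unfolding Q_def x_def using T assms(4) M_self_adjoint_inner[OF assms(1), of v "T *\<^sub>v v"] by auto
  have image: "M_inner (x + a \<cdot>\<^sub>v v) (T *\<^sub>v (x + a \<cdot>\<^sub>v v))
      = M_inner x (T *\<^sub>v x) + a * (2 * Q) + a\<^sup>2 * M_inner v (T *\<^sub>v v)" for a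
  proof -
    have "T *\<^sub>v (x + a \<cdot>\<^sub>v v) = T *\<^sub>v x + a \<cdot>\<^sub>v (T *\<^sub>v v)"
      using T x assms(4) by (simp add: mult_add_distrib_mat_vec[of _ n n] mult_mat_vec[of _ n n])
    then show ?thesis using M_inner_add_smult[OF x(1) assms(4) x(2,3)] Q by simp
  qed
  have norm: "M_inner (x + a \<cdot>\<^sub>v v) (x + a \<cdot>\<^sub>v v)
      = Q + a * (M_inner x v + M_inner v x) + a\<^sup>2 * M_inner v v" for a
    using M_inner_add_smult[OF x(1) assms(4) x(1) assms(4)] unfolding Q_def .
  have bound: "\<bar>M_inner (x + a \<cdot>\<^sub>v v) (T *\<^sub>v (x + a \<cdot>\<^sub>v v))\<bar> \<le> r * M_inner (x + a \<cdot>\<^sub>v v) (x + a \<cdot>\<^sub>v v)" for a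
    using assms(2) x assms(4) unfolding M_numerical_radius_le_def by simp
  have "M_inner x (T *\<^sub>v x) + r * (2 * Q) + r\<^sup>2 * M_inner v (T *\<^sub>v v)
      \<le> r * (Q + r * (M_inner x v + M_inner v x) + r\<^sup>2 * M_inner v v)"
    using bound[of r] unfolding image norm by simp
  moreover have "- (M_inner x (T *\<^sub>v x) - r * (2 * Q) + r\<^sup>2 * M_inner v (T *\<^sub>v v))
      \<le> r * (Q - r * (M_inner x v + M_inner v x) + r\<^sup>2 * M_inner v v)"
    using bound[of "- r"] unfolding image norm by simp
  ultimately have "r * (4 * Q) \<le> r * (2 * Q + 2 * r\<^sup>2 * M_inner v v)"
    by (simp add: algebra_simps)
  then have "Q \<le> r\<^sup>2 * M_inner v v" using assms(3) by (simp add: mult_le_cancel_left_pos)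
  then show ?thesis unfolding Q_def x_def .
qed

lemma M_inner_pow_self_le:
  assumes "M_self_adjoint T" "M_numerical_radius_le T r" "r > 0" "u \<in> carrier_vec n"
  shows "M_inner (T ^\<^sub>m l *\<^sub>v u) (T ^\<^sub>m l *\<^sub>v u) \<le> r ^ (2 * l) * M_inner u u"
proof (induction l)
  case 0
  show ?case using assms(4) carrier_matD(1)[OF M_self_adjoint_carrier[OF assms(1)]] by simp
next
  case (Suc l)
  have T: "T \<in> carrier_mat n n" using M_self_adjoint_carrier[OF assms(1)] .
  have "M_inner (T ^\<^sub>m Suc l *\<^sub>v u) (T ^\<^sub>m Suc l *\<^sub>v u) \<le> r\<^sup>2 * M_inner (T ^\<^sub>m l *\<^sub>v u) (T ^\<^sub>m l *\<^sub>v u)"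
    unfolding pow_mat_Suc_mult_vec[OF T assms(4)] using T assms(4) by (intro M_inner_image_le[OF assms(1-3)]) simp
  also have "\<dots> \<le> r\<^sup>2 * (r ^ (2 * l) * M_inner u u)"
    using Suc assms(3) by (intro mult_left_mono) auto
  also have "\<dots> = r ^ (2 * Suc l) * M_inner u u"
    by (simp add: power_add power2_eq_square)
  finally show ?case .
qed

lemma M_inner_pow_le:
  assumes "M_self_adjoint T" "M_numerical_radius_le T r" "r > 0" "u \<in> carrier_vec n"
  shows "\<bar>M_inner u (T ^\<^sub>m m *\<^sub>v u)\<bar> \<le> r ^ m * M_inner u u"
proof -
  have T: "T \<in> carrier_mat n n" using M_self_adjoint_carrier[OF assms(1)] .
  have Tu: "T ^\<^sub>m l *\<^sub>v u \<in> carrier_vec n" for l using T assms(4) by simp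
  have "\<exists>l. m = l + l \<or> m = Suc (l + l)" by presburger
  then obtain l where "m = l + l \<or> m = Suc (l + l)" by blast
  then consider (even) "m = l + l" | (odd) "m = l + Suc l" by auto
  then show ?thesis
  proof cases
    case even
    have "0 \<le> M_inner (T ^\<^sub>m l *\<^sub>v u) (T ^\<^sub>m l *\<^sub>v u)"
      using M_numerical_radius_le_nonneg[OF assms(2,3) Tu] .
    then show ?thesis
      using M_inner_pow_self_le[OF assms, of l] M_inner_pow[OF assms(1,4), of l l] unfolding \<open>m = l + l\<close> by (simp add: mult_2)
  next
    case odd
    define w where "w = T ^\<^sub>m l *\<^sub>v u"
    have "\<bar>M_inner u (T ^\<^sub>m m *\<^sub>v u)\<bar> = \<bar>M_inner w (T *\<^sub>v w)\<bar>"
      unfolding w_def odd M_inner_pow[OF assms(1,4), symmetric] pow_mat_Suc_mult_vec[OF T assms(4)] ..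
    also have "\<dots> \<le> r * M_inner w w"
      using assms(2) Tu unfolding M_numerical_radius_le_def w_def by simp
    also have "\<dots> \<le> r * (r ^ (2 * l) * M_inner u u)"
      unfolding w_def using M_inner_pow_self_le[OF assms, of l] assms(3) by (intro mult_left_mono) auto
    also have "\<dots> = r ^ m * M_inner u u"
      unfolding odd by (simp add: mult_2)
    finally show ?thesis .
  qed
qed

lemma M_inner_inv_sqrt_trunc_right:
  assumes "T \<in> carrier_mat n n" "w \<in> carrier_vec n" "u \<in> carrier_vec n"
  shows "M_inner w (inv_sqrt_trunc T N *\<^sub>v u) = (\<Sum>j<N. inv_sqrt_coeff j * M_inner w (T ^\<^sub>m j *\<^sub>v u))"
proof (induction N)
  case 0
  have "dim_row T = n" using carrier_matD(1)[OF assms(1)] .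
  then show ?case using assms by (simp add: zero_mult_mat_vec M_inner_zero_right)
next
  case (Suc N)
  have F: "inv_sqrt_trunc T N *\<^sub>v u \<in> carrier_vec n" and P: "T ^\<^sub>m N *\<^sub>v u \<in> carrier_vec n"
    using assms by simp_all
  have "inv_sqrt_trunc T (Suc N) *\<^sub>v u = inv_sqrt_trunc T N *\<^sub>v u + inv_sqrt_coeff N \<cdot>\<^sub>v (T ^\<^sub>m N *\<^sub>v u)"
    using assms by (simp add: add_mult_distrib_mat_vec[of _ n n] smult_mult_mat_vec[of _ n n])
  then show ?case
    using Suc assms(2) F P by (simp add: M_inner_add_right M_inner_smult_right)
qed

lemma M_inner_inv_sqrt_trunc_left:
  assumes "T \<in> carrier_mat n n" "u \<in> carrier_vec n" "w \<in> carrier_vec n"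
  shows "M_inner (inv_sqrt_trunc T N *\<^sub>v u) w = (\<Sum>i<N. inv_sqrt_coeff i * M_inner (T ^\<^sub>m i *\<^sub>v u) w)"
proof -
  have "M_inner (inv_sqrt_trunc T N *\<^sub>v u) w = M_inner w (inv_sqrt_trunc T N *\<^sub>v u)"
    using assms by (intro M_inner_sym) simp_all
  also have "\<dots> = (\<Sum>i<N. inv_sqrt_coeff i * M_inner w (T ^\<^sub>m i *\<^sub>v u))"
    using M_inner_inv_sqrt_trunc_right[OF assms(1,3,2)] .
  also have "\<dots> = (\<Sum>i<N. inv_sqrt_coeff i * M_inner (T ^\<^sub>m i *\<^sub>v u) w)"
    using assms by (intro sum.cong refl) (simp add: M_inner_sym[of w])
  finally show ?thesis .
qed

section \<open>Approximating the inverse square root\<close>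

lemma inv_sqrt_trunc_quadratic_form:
  assumes "M_self_adjoint T" "u \<in> carrier_vec n"
  shows "M_inner (inv_sqrt_trunc T N *\<^sub>v u) (inv_sqrt_trunc T N *\<^sub>v u)
      - M_inner (inv_sqrt_trunc T N *\<^sub>v u) (T *\<^sub>v (inv_sqrt_trunc T N *\<^sub>v u))
    = (\<Sum>i<N. \<Sum>j<N. inv_sqrt_coeff i * inv_sqrt_coeff j
        * (M_inner u (T ^\<^sub>m (i + j) *\<^sub>v u) - M_inner u (T ^\<^sub>m (i + j + 1) *\<^sub>v u)))"
proof -
  have T: "T \<in> carrier_mat n n" using M_self_adjoint_carrier[OF assms(1)] .
  have F: "inv_sqrt_trunc T N *\<^sub>v u \<in> carrier_vec n" using T assms(2) by simp
  have Tpow: "T ^\<^sub>m i *\<^sub>v u \<in> carrier_vec n" for i using T assms(2) by simp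
  have "M_inner (inv_sqrt_trunc T N *\<^sub>v u) (inv_sqrt_trunc T N *\<^sub>v u)
      = (\<Sum>i<N. inv_sqrt_coeff i * M_inner (T ^\<^sub>m i *\<^sub>v u) (inv_sqrt_trunc T N *\<^sub>v u))"
    by (rule M_inner_inv_sqrt_trunc_left[OF T assms(2) F])
  also have "\<dots> = (\<Sum>i<N. \<Sum>j<N. inv_sqrt_coeff i * inv_sqrt_coeff j * M_inner u (T ^\<^sub>m (i + j) *\<^sub>v u))"
    by (simp add: M_inner_inv_sqrt_trunc_right[OF T Tpow assms(2)] M_inner_pow[OF assms]
        sum_distrib_left mult.assoc)
  finally have square: "M_inner (inv_sqrt_trunc T N *\<^sub>v u) (inv_sqrt_trunc T N *\<^sub>v u)
      = (\<Sum>i<N. \<Sum>j<N. inv_sqrt_coeff i * inv_sqrt_coeff j * M_inner u (T ^\<^sub>m (i + j) *\<^sub>v u))" .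
  have "M_inner (inv_sqrt_trunc T N *\<^sub>v u) (T *\<^sub>v (inv_sqrt_trunc T N *\<^sub>v u))
      = (\<Sum>i<N. inv_sqrt_coeff i * M_inner (T ^\<^sub>m i *\<^sub>v u) (T *\<^sub>v (inv_sqrt_trunc T N *\<^sub>v u)))"
    using T F by (intro M_inner_inv_sqrt_trunc_left[OF T assms(2)]) simp
  also have "\<dots> = (\<Sum>i<N. inv_sqrt_coeff i * M_inner (T ^\<^sub>m Suc i *\<^sub>v u) (inv_sqrt_trunc T N *\<^sub>v u))"
    unfolding pow_mat_Suc_mult_vec[OF T assms(2)] M_self_adjoint_inner[OF assms(1) Tpow F] ..
  also have "\<dots> = (\<Sum>i<N. \<Sum>j<N. inv_sqrt_coeff i * inv_sqrt_coeff j * M_inner u (T ^\<^sub>m (i + j + 1) *\<^sub>v u))"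
    by (simp add: M_inner_inv_sqrt_trunc_right[OF T Tpow assms(2)] M_inner_pow[OF assms]
        sum_distrib_left mult.assoc del: pow_mat.simps)
  finally show ?thesis
    unfolding square by (simp add: sum_subtractf right_diff_distrib)
qed

lemma inv_sqrt_trunc_error:
  assumes "M_self_adjoint T" "M_numerical_radius_le T r" "0 < r" "r \<le> 1" "N \<ge> 1" "u \<in> carrier_vec n"
  shows "\<bar>M_inner (inv_sqrt_trunc T N *\<^sub>v u) (inv_sqrt_trunc T N *\<^sub>v u)
      - M_inner (inv_sqrt_trunc T N *\<^sub>v u) (T *\<^sub>v (inv_sqrt_trunc T N *\<^sub>v u)) - M_inner u u\<bar>
    \<le> real N * (real N + 1) * r ^ N * M_inner u u"
proof -
  have "dim_row T = n" using carrier_matD(1)[OF M_self_adjoint_carrier[OF assms(1)]] .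
  then have G0: "M_inner u (T ^\<^sub>m 0 *\<^sub>v u) = M_inner u u" using assms(6) by simp
  have "\<bar>M_inner u (T ^\<^sub>m m *\<^sub>v u)\<bar> \<le> r ^ m * M_inner u (T ^\<^sub>m 0 *\<^sub>v u)" for m
    unfolding G0 by (rule M_inner_pow_le[OF assms(1-3,6)])
  from trunc_square_times_one_minus_error[OF assms(5) less_imp_le[OF assms(3)] assms(4) this]
  show ?thesis
    unfolding inv_sqrt_trunc_quadratic_form[OF assms(1,6)] G0 .
qed

text \<open>Error propagation matrix of Richardson iteration for \<open>M\<close>, preconditioned by \<open>Z Z\<^sup>T\<close> with step \<open>s\<close>.\<close>
definition richardson_mat :: "real mat \<Rightarrow> real \<Rightarrow> real mat" where
  "richardson_mat Z s = 1\<^sub>m n + (- s) \<cdot>\<^sub>m (Z * transpose_mat Z * M)"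

lemma richardson_mat_mult_vec:
  assumes "Z \<in> carrier_mat n k" "v \<in> carrier_vec n"
  shows "richardson_mat Z s *\<^sub>v v = v + (- s) \<cdot>\<^sub>v (Z * transpose_mat Z *\<^sub>v (M *\<^sub>v v))"
proof -
  have A: "Z * transpose_mat Z \<in> carrier_mat n n" using assms(1) by simp
  show ?thesis
    unfolding richardson_mat_def using A assms(2)
    by (simp add: add_mult_distrib_mat_vec[of _ n n] smult_mult_mat_vec[of _ n n]
        assoc_mult_mat_vec[of _ n n _ n])
qed

lemma M_self_adjoint_mult_M:
  assumes "A \<in> carrier_mat n n" "transpose_mat A = A"
  shows "M_self_adjoint (A * M)"
proof -
  have "transpose_mat (A * M) * M = (M * A) * M"
    using assms by (simp add: transpose_mult[of _ n n _ n] M_sym)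
  also have "\<dots> = M * (A * M)" using assms(1) by (simp add: assoc_mult_mat[of _ n n _ n _ n])
  finally show ?thesis unfolding M_self_adjoint_def using assms(1) by simp
qed

lemma M_self_adjoint_richardson:
  assumes "Z \<in> carrier_mat n k"
  shows "M_self_adjoint (richardson_mat Z s)"
proof -
  have "transpose_mat (Z * transpose_mat Z) = Z * transpose_mat Z"
    using assms by (simp add: transpose_mult[of _ n k _ n])
  then have "M_self_adjoint (Z * transpose_mat Z * M)"
    using assms by (intro M_self_adjoint_mult_M) simp_all
  then show ?thesis
    unfolding richardson_mat_def by (intro M_self_adjoint_add M_self_adjoint_one M_self_adjoint_smult)
qed

text \<open>The step \<open>1 / cosh c\<close> centres the spectrum \<open>[exp (-c), exp c]\<close> of the preconditioned
  matrix, so that \<open>1 - s \<lambda>\<close> lies in \<open>[-tanh c, tanh c]\<close>.\<close>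
lemma M_numerical_radius_richardson:
  assumes "Z \<in> carrier_mat n k"
    and bounds: "\<And>v. v \<in> carrier_vec n \<Longrightarrow>
      exp (- c) * M_inner v v \<le> M_inner v (Z * transpose_mat Z *\<^sub>v (M *\<^sub>v v))
      \<and> M_inner v (Z * transpose_mat Z *\<^sub>v (M *\<^sub>v v)) \<le> exp c * M_inner v v"
  shows "M_numerical_radius_le (richardson_mat Z (1 / cosh c)) (tanh c)"
  unfolding M_numerical_radius_le_def
proof
  fix v :: "real vec" assume v: "v \<in> carrier_vec n"
  define V where "V = M_inner v v"
  define W where "W = M_inner v (Z * transpose_mat Z *\<^sub>v (M *\<^sub>v v))"
  have AMv: "Z * transpose_mat Z *\<^sub>v (M *\<^sub>v v) \<in> carrier_vec n" using assms(1) v by simp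
  have "M_inner v (richardson_mat Z (1 / cosh c) *\<^sub>v v) = V - W / cosh c"
    unfolding richardson_mat_mult_vec[OF assms(1) v] V_def W_def
    using v AMv by (simp add: M_inner_add_right M_inner_smult_right)
  also have "\<dots> = (cosh c * V - W) / cosh c" by (simp add: field_simps)
  finally have eq: "M_inner v (richardson_mat Z (1 / cosh c) *\<^sub>v v) = (cosh c * V - W) / cosh c" .
  have "\<bar>cosh c * V - W\<bar> \<le> sinh c * V"
    using bounds[OF v] unfolding V_def[symmetric] W_def[symmetric]
      cosh_minus_sinh[symmetric] cosh_plus_sinh[symmetric]
    by (simp add: abs_le_iff algebra_simps)
  then have "\<bar>cosh c * V - W\<bar> / cosh c \<le> sinh c * V / cosh c"
    by (intro divide_right_mono) auto
  then show "\<bar>M_inner v (richardson_mat Z (1 / cosh c) *\<^sub>v v)\<bar> \<le> tanh c * M_inner v v"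
    unfolding eq V_def[symmetric] by (simp add: tanh_def)
qed

lemma spec_approx_M_inner_bounds:
  assumes "Minv \<in> carrier_mat n n" "Minv * M = 1\<^sub>m n" "A \<in> carrier_mat n n"
    and "spec_approx c Minv A" "v \<in> carrier_vec n"
  shows "exp (- c) * M_inner v v \<le> M_inner v (A *\<^sub>v (M *\<^sub>v v))
    \<and> M_inner v (A *\<^sub>v (M *\<^sub>v v)) \<le> exp c * M_inner v v"
proof -
  define x where "x = M *\<^sub>v v"
  have x: "x \<in> carrier_vec n" unfolding x_def using assms(5) by simp
  have "Minv *\<^sub>v x = v"
    unfolding x_def using assms by (simp add: assoc_mult_mat_vec[of _ n n _ n, symmetric])
  then have Minv_form: "x \<bullet> (Minv *\<^sub>v x) = M_inner v v"
    unfolding x_def using assms(5) by (simp add: M_mult_scalar_prod)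
  have A_form: "x \<bullet> (A *\<^sub>v x) = M_inner v (A *\<^sub>v (M *\<^sub>v v))"
    unfolding x_def using assms(3,5) by (simp add: M_mult_scalar_prod)
  have smult_form: "x \<bullet> ((a \<cdot>\<^sub>m Minv) *\<^sub>v x) = a * M_inner v v" for a
    using assms(1) x by (simp add: smult_mult_mat_vec[of _ n n] Minv_form[symmetric])
  have "x \<bullet> (A *\<^sub>v x) \<le> x \<bullet> ((exp c \<cdot>\<^sub>m Minv) *\<^sub>v x)"
    "x \<bullet> ((exp (- c) \<cdot>\<^sub>m Minv) *\<^sub>v x) \<le> x \<bullet> (A *\<^sub>v x)"
    using assms(4) x carrier_matD[OF assms(1)] carrier_matD[OF assms(3)]
    unfolding spec_approx_def loewner_ge_def by auto
  then show ?thesis unfolding smult_form A_form by simp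
qed

definition inv_sqrt_factor :: "real mat \<Rightarrow> real \<Rightarrow> nat \<Rightarrow> real mat" where
  "inv_sqrt_factor Z c N = sqrt (1 / cosh c) \<cdot>\<^sub>m (inv_sqrt_trunc (richardson_mat Z (1 / cosh c)) N * Z)"

lemma M_self_adjoint_factor_quadratic_form:
  assumes "M_self_adjoint F" "Z \<in> carrier_mat n k" "u \<in> carrier_vec n"
  shows "(M *\<^sub>v u) \<bullet> ((a \<cdot>\<^sub>m (F * Z)) * transpose_mat (a \<cdot>\<^sub>m (F * Z)) *\<^sub>v (M *\<^sub>v u))
    = a\<^sup>2 * M_inner (F *\<^sub>v u) (Z * transpose_mat Z *\<^sub>v (M *\<^sub>v (F *\<^sub>v u)))"
proof -
  have F: "F \<in> carrier_mat n n" using M_self_adjoint_carrier[OF assms(1)] .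
  define C where "C = a \<cdot>\<^sub>m (F * Z)"
  have C: "C \<in> carrier_mat n k" unfolding C_def using F assms(2) by simp
  define x where "x = M *\<^sub>v u"
  have x: "x \<in> carrier_vec n" unfolding x_def using assms(3) by simp
  define w where "w = M *\<^sub>v (F *\<^sub>v u)"
  have w: "w \<in> carrier_vec n" unfolding w_def using F assms(3) by simp
  define y where "y = transpose_mat Z *\<^sub>v w"
  have y: "y \<in> carrier_vec k" unfolding y_def using assms(2) w by simp
  have "transpose_mat C *\<^sub>v x = a \<cdot>\<^sub>v (transpose_mat Z *\<^sub>v (transpose_mat F *\<^sub>v x))"
    unfolding C_def using F assms(2) x
    by (simp add: transpose_smult_mat transpose_mult[of _ n n _ k] smult_mult_mat_vec[of _ k n]
        assoc_mult_mat_vec[of _ k n _ n])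
  also have "\<dots> = a \<cdot>\<^sub>v y"
    unfolding y_def w_def x_def M_self_adjoint_transpose_apply[OF assms(1,3)] ..
  finally have Cx: "transpose_mat C *\<^sub>v x = a \<cdot>\<^sub>v y" .
  have "x \<bullet> ((C * transpose_mat C) *\<^sub>v x) = x \<bullet> (C *\<^sub>v (transpose_mat C *\<^sub>v x))"
    using C x by (simp add: assoc_mult_mat_vec[of _ n k _ n])
  also have "\<dots> = (transpose_mat C *\<^sub>v x) \<bullet> (transpose_mat C *\<^sub>v x)"
    using C x by (intro transpose_vec_mult_scalar[symmetric, of _ n k]) simp_all
  also have "\<dots> = a\<^sup>2 * (y \<bullet> y)" unfolding Cx using y by (simp add: power2_eq_square)
  also have "y \<bullet> y = w \<bullet> (Z *\<^sub>v y)"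
    unfolding y_def using assms(2) w by (intro transpose_vec_mult_scalar[of _ n k]) simp_all
  also have "\<dots> = w \<bullet> (Z * transpose_mat Z *\<^sub>v w)"
    unfolding y_def using assms(2) w by (simp add: assoc_mult_mat_vec[of _ n k _ n])
  also have "\<dots> = M_inner (F *\<^sub>v u) (Z * transpose_mat Z *\<^sub>v (M *\<^sub>v (F *\<^sub>v u)))"
    unfolding w_def using F assms(2,3) by (simp add: M_mult_scalar_prod)
  finally show ?thesis unfolding C_def x_def .
qed

lemma inv_sqrt_factor_relative_error:
  assumes "Minv \<in> carrier_mat n n" "M * Minv = 1\<^sub>m n" "Z \<in> carrier_mat n k"
    and "spec_approx c Minv (Z * transpose_mat Z)" "c > 0" "N \<ge> 1" "x \<in> carrier_vec n"
  shows "\<bar>x \<bullet> (inv_sqrt_factor Z c N * transpose_mat (inv_sqrt_factor Z c N) *\<^sub>v x) - x \<bullet> (Minv *\<^sub>v x)\<bar>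
    \<le> real N * (real N + 1) * tanh c ^ N * (x \<bullet> (Minv *\<^sub>v x))"
proof -
  define s where "s = 1 / cosh c"
  define T where "T = richardson_mat Z s"
  define F where "F = inv_sqrt_trunc T N"
  have Minv_M: "Minv * M = 1\<^sub>m n" using mat_mult_left_right_inverse[OF M_carrier assms(1,2)] .
  define u where "u = Minv *\<^sub>v x"
  have u: "u \<in> carrier_vec n" unfolding u_def using assms(1,7) by simp
  have x: "x = M *\<^sub>v u"
    unfolding u_def using assms(1,2,7) by (simp add: assoc_mult_mat_vec[of _ n n _ n, symmetric])
  have Minv_form: "x \<bullet> (Minv *\<^sub>v x) = M_inner u u"
    unfolding u_def[symmetric] using M_mult_scalar_prod[OF u u] x by simp
  have T: "M_self_adjoint T" unfolding T_def using M_self_adjoint_richardson[OF assms(3)] .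
  have radius: "M_numerical_radius_le T (tanh c)"
    unfolding T_def s_def using assms(1,3,4)
    by (intro M_numerical_radius_richardson[OF assms(3)] spec_approx_M_inner_bounds[OF _ Minv_M]) simp_all
  have Fu: "F *\<^sub>v u \<in> carrier_vec n" "Z * transpose_mat Z *\<^sub>v (M *\<^sub>v (F *\<^sub>v u)) \<in> carrier_vec n"
    unfolding F_def using M_self_adjoint_carrier[OF T] assms(3) u by simp_all
  have "x \<bullet> (inv_sqrt_factor Z c N * transpose_mat (inv_sqrt_factor Z c N) *\<^sub>v x)
      = s * M_inner (F *\<^sub>v u) (Z * transpose_mat Z *\<^sub>v (M *\<^sub>v (F *\<^sub>v u)))"
    unfolding x inv_sqrt_factor_def s_def[symmetric] T_def[symmetric] F_def[symmetric]
    using M_self_adjoint_factor_quadratic_form[OF M_self_adjoint_inv_sqrt_trunc[OF T] assms(3) u]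
    by (simp add: F_def s_def)
  also have "\<dots> = M_inner (F *\<^sub>v u) (F *\<^sub>v u) - M_inner (F *\<^sub>v u) (T *\<^sub>v (F *\<^sub>v u))"
    unfolding T_def richardson_mat_mult_vec[OF assms(3) Fu(1)]
    using Fu by (simp add: M_inner_add_right M_inner_smult_right)
  finally show ?thesis
    unfolding Minv_form F_def
    using inv_sqrt_trunc_error[OF T radius _ _ assms(6) u] assms(5)
    by (simp add: tanh_real_lt_1 less_imp_le)
qed

lemma poly_expr_richardson:
  assumes "Z \<in> carrier_mat n k"
  shows "poly_expr M Z (richardson_mat Z s) 3"
proof -
  have Z: "dim_row Z = n" "dim_col Z = k" using carrier_matD[OF assms] by auto
  have "poly_expr M Z (1\<^sub>m n) 3" using poly_expr.mono[OF poly_expr.id_row[of M Z]] Z by simp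
  moreover have "poly_expr M Z (Z * transpose_mat Z * M) 3"
    using poly_expr.mult[OF poly_expr.mult[OF poly_expr.var_Z poly_expr.var_ZT] poly_expr.var_M] Z
    by (simp add: numeral_3_eq_3)
  ultimately show ?thesis
    unfolding richardson_mat_def using Z by (intro poly_expr.add poly_expr.smult) simp_all
qed

lemma poly_expr_inv_sqrt_factor:
  assumes "Z \<in> carrier_mat n k"
  shows "poly_expr M Z (inv_sqrt_factor Z c N) (3 * N + 1)"
proof -
  have Z: "dim_row Z = n" using carrier_matD[OF assms] by simp
  have R: "richardson_mat Z (1 / cosh c) \<in> carrier_mat (dim_row Z) (dim_row Z)"
    using M_self_adjoint_carrier[OF M_self_adjoint_richardson[OF assms]] Z by simp
  have "poly_expr M Z (inv_sqrt_trunc (richardson_mat Z (1 / cosh c)) N * Z) (3 * N + 1)"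
    using carrier_matD(2)[OF inv_sqrt_trunc_carrier[OF R]]
    by (intro poly_expr.mult[OF poly_expr_inv_sqrt_trunc[OF poly_expr_richardson[OF assms] R]
        poly_expr.var_Z]) simp
  then show ?thesis unfolding inv_sqrt_factor_def by (rule poly_expr.smult)
qed

lemma inv_sqrt_factor_spec_approx:
  assumes "Minv \<in> carrier_mat n n" "M * Minv = 1\<^sub>m n" "Z \<in> carrier_mat n k"
    and "spec_approx c Minv (Z * transpose_mat Z)" "c > 0" "eps > 0" "N \<ge> 1"
    and "real N * (real N + 1) * tanh c ^ N \<le> 1 - exp (- eps)"
  shows "spec_approx eps (inv_sqrt_factor Z c N * transpose_mat (inv_sqrt_factor Z c N)) Minv"
proof (rule spec_approx_of_relative_error)
  have "inv_sqrt_factor Z c N \<in> carrier_mat n k"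
    unfolding inv_sqrt_factor_def
    using M_self_adjoint_carrier[OF M_self_adjoint_richardson[OF assms(3)]] assms(3)
    by (intro smult_carrier_mat mult_carrier_mat[of _ n n]) simp_all
  then show "inv_sqrt_factor Z c N * transpose_mat (inv_sqrt_factor Z c N) \<in> carrier_mat n n" by simp
next
  fix x :: "real vec" assume x: "x \<in> carrier_vec n"
  define a where "a = real N * (real N + 1) * tanh c ^ N"
  have "a > 0" unfolding a_def using assms(5,7) by simp
  have err: "\<bar>x \<bullet> (inv_sqrt_factor Z c N * transpose_mat (inv_sqrt_factor Z c N) *\<^sub>v x) - x \<bullet> (Minv *\<^sub>v x)\<bar>
      \<le> a * (x \<bullet> (Minv *\<^sub>v x))"
    unfolding a_def by (rule inv_sqrt_factor_relative_error[OF assms(1-5,7) x])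
  then have "0 \<le> a * (x \<bullet> (Minv *\<^sub>v x))" by (meson abs_ge_zero order_trans)
  with \<open>a > 0\<close> have "0 \<le> x \<bullet> (Minv *\<^sub>v x)" by (simp add: zero_le_mult_iff)
  with err assms(8) show "\<bar>x \<bullet> (inv_sqrt_factor Z c N * transpose_mat (inv_sqrt_factor Z c N) *\<^sub>v x) - x \<bullet> (Minv *\<^sub>v x)\<bar>
      \<le> (1 - exp (- eps)) * (x \<bullet> (Minv *\<^sub>v x))"
    unfolding a_def by (meson mult_right_mono order_trans)
qed (use assms in simp_all)

end

lemma inv_sqrt_factor_exists:
  fixes c0 :: real
  assumes "c0 > 0"
  obtains K where "\<And>n k M Minv Z eps. M \<in> carrier_mat n n \<Longrightarrow> pos_def_mat M \<Longrightarrow>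
      Minv \<in> carrier_mat n n \<Longrightarrow> inverts_mat M Minv \<Longrightarrow> Z \<in> carrier_mat n k \<Longrightarrow>
      spec_approx c0 Minv (Z * transpose_mat Z) \<Longrightarrow> eps > 0 \<Longrightarrow>
      \<exists>C d. poly_expr M Z C d \<and> real d \<le> K * max 1 (ln (1 / eps)) \<and>
        spec_approx eps (C * transpose_mat C) Minv"
proof -
  have "0 < tanh c0" "tanh c0 < 1" using assms by (simp_all add: tanh_real_lt_1)
  then obtain K where K: "\<forall>eps>0. \<exists>N\<ge>1. real N * (real N + 1) * tanh c0 ^ N \<le> 1 - exp (- eps)
      \<and> real N \<le> K * max 1 (ln (1 / eps))"
    using truncation_order_exists by blast
  show thesis
  proof (rule that[of "3 * K + 1"])
    fix n k :: nat and M Minv Z :: "real mat" and eps :: real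
    assume M: "M \<in> carrier_mat n n" "pos_def_mat M" and Minv: "Minv \<in> carrier_mat n n" "inverts_mat M Minv"
      and Z: "Z \<in> carrier_mat n k" and approx: "spec_approx c0 Minv (Z * transpose_mat Z)" and eps: "eps > 0"
    obtain N where N: "N \<ge> 1" "real N * (real N + 1) * tanh c0 ^ N \<le> 1 - exp (- eps)"
      "real N \<le> K * max 1 (ln (1 / eps))"
      using K eps by blast
    interpret symmetric_form n M
      using M unfolding pos_def_mat_def by unfold_locales simp_all
    have "M * Minv = 1\<^sub>m n" using Minv(2) unfolding inverts_mat_def by simp
    then have "spec_approx eps (inv_sqrt_factor Z c0 N * transpose_mat (inv_sqrt_factor Z c0 N)) Minv"
      using inv_sqrt_factor_spec_approx Minv(1) Z approx assms eps N(1,2) by blast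
    moreover have "real (3 * N + 1) \<le> (3 * K + 1) * max 1 (ln (1 / eps))"
      using N(3) by (simp add: algebra_simps)
    ultimately show "\<exists>C d. poly_expr M Z C d \<and> real d \<le> (3 * K + 1) * max 1 (ln (1 / eps)) \<and>
        spec_approx eps (C * transpose_mat C) Minv"
      using poly_expr_inv_sqrt_factor[OF Z] by blast
  qed
qed

theorem mainTheorem11:
  "\<forall>c0 :: real. c0 > 0 \<longrightarrow> (\<exists>K :: real. \<forall>(n :: nat) (k :: nat) (M :: real mat) (Minv :: real mat) (Z :: real mat) (eps :: real).
     M \<in> carrier_mat n n \<longrightarrow> pos_def_mat M \<longrightarrow>
     Minv \<in> carrier_mat n n \<longrightarrow> inverts_mat M Minv \<longrightarrow>
     Z \<in> carrier_mat n k \<longrightarrow>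
     spec_approx c0 Minv (Z * transpose_mat Z) \<longrightarrow>
     eps > 0 \<longrightarrow>
     (\<exists>(C :: real mat) (d :: nat). poly_expr M Z C d \<and> real d \<le> K * max 1 (ln (1 / eps)) \<and>
        spec_approx eps (C * transpose_mat C) Minv))"
  by (metis inv_sqrt_factor_exists)

end
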